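(* The function $h:2^V\to\mathbb{R}$, $h(A)=\sum_{v\in V}h_A(v)$, is non-decreasing and submodular: for all $A\subseteq B\subseteq V$, $h(A)\le h(B)$, and for all $x\in V$, $h(B\cup\{x\})-h(B)\le h(A\cup\{x\})-h(A)$.
   Context: $G=(V,E,w)$ is a finite simple undirected graph with positive edge weights $w$. $N_A(v)=N(v)\cap A$, $W_A(v)=\sum_{u\in N_A(v)}w_{(v,u)}$, $W(v)=W_V(v)$. Define $h_A(v)=W(v)/2$ if $v\in A$ or $W_A(v)\ge W(v)/2$, and $h_A(v)=W_A(v)$ otherwise. *)

theory Defs
  imports Complex_Main
begin

definition wgraph :: "'a set \<Rightarrow> ('a \<Rightarrow> 'a \<Rightarrow> bool) \<Rightarrow> ('a \<Rightarrow> 'a \<Rightarrow> real) \<Rightarrow> bool" where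
  "wgraph V E w \<longleftrightarrow> finite V
     \<and> (\<forall>u v. E u v \<longrightarrow> u \<in> V \<and> v \<in> V)
     \<and> (\<forall>u v. E u v \<longrightarrow> E v u)
     \<and> (\<forall>v. \<not> E v v)
     \<and> (\<forall>u v. E u v \<longrightarrow> w u v > 0 \<and> w u v = w v u)"

definition nbhd :: "('a \<Rightarrow> 'a \<Rightarrow> bool) \<Rightarrow> 'a set \<Rightarrow> 'a \<Rightarrow> 'a set" where
  "nbhd E A v = {u \<in> A. E v u}"

definition wdeg :: "('a \<Rightarrow> 'a \<Rightarrow> bool) \<Rightarrow> ('a \<Rightarrow> 'a \<Rightarrow> real) \<Rightarrow> 'a set \<Rightarrow> 'a \<Rightarrow> real" where
  "wdeg E w A v = (\<Sum>u\<in>nbhd E A v. w v u)"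

definition hloc :: "'a set \<Rightarrow> ('a \<Rightarrow> 'a \<Rightarrow> bool) \<Rightarrow> ('a \<Rightarrow> 'a \<Rightarrow> real) \<Rightarrow> 'a set \<Rightarrow> 'a \<Rightarrow> real" where
  "hloc V E w A v = (if v \<in> A \<or> wdeg E w A v \<ge> wdeg E w V v / 2
                     then wdeg E w V v / 2 else wdeg E w A v)"

definition hfun :: "'a set \<Rightarrow> ('a \<Rightarrow> 'a \<Rightarrow> bool) \<Rightarrow> ('a \<Rightarrow> 'a \<Rightarrow> real) \<Rightarrow> 'a set \<Rightarrow> real" where
  "hfun V E w A = (\<Sum>v\<in>V. hloc V E w A v)"

end

theory Submission
  imports Defs
begin

text \<open>For a fixed vertex v, set c = W(v)/2 and give weight c to v itself and weight w(v,u)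
  to every neighbour u. Then h_A(v) = min(c, total weight of A): when v is in A the total
  is at least c. So h is a sum of truncated nonnegative additive set functions, and such
  truncations are monotone and submodular because t \<mapsto> min c t is nondecreasing and concave.\<close>

lemma min_increment_antimono:
  fixes c s t d e :: real
  assumes "s \<le> t" "0 \<le> e" "e \<le> d"
  shows "min c (t + e) - min c t \<le> min c (s + d) - min c s"
  using assms by (simp add: min_def)

lemma min_sum_mono:
  fixes a :: "'a \<Rightarrow> real"
  assumes "\<And>u. 0 \<le> a u" "finite B" "A \<subseteq> B"
  shows "min c (sum a A) \<le> min c (sum a B)"
proof -
  have "sum a A \<le> sum a B" using sum_mono2[OF assms(2,3)] assms(1) by blast
  then show ?thesis by (simp add: min_def)
qed

lemma min_sum_submodular:
  fixes a :: "'a \<Rightarrow> real"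
  assumes nonneg: "\<And>u. 0 \<le> a u" and "finite B" "A \<subseteq> B"
  shows "min c (sum a (insert x B)) - min c (sum a B)
           \<le> min c (sum a (insert x A)) - min c (sum a A)"
proof -
  have "finite A" using assms(2,3) finite_subset by blast
  have incr: "sum a (insert x S) = sum a S + (if x \<in> S then 0 else a x)" if "finite S" for S
    using that by (simp add: insert_absorb)
  have "sum a A \<le> sum a B" using sum_mono2[OF assms(2,3)] nonneg by blast
  moreover have "(if x \<in> B then 0 else a x) \<le> (if x \<in> A then 0 else a x)"
    using assms(3) nonneg by auto
  ultimately show ?thesis
    unfolding incr[OF \<open>finite A\<close>] incr[OF \<open>finite B\<close>]
    by (intro min_increment_antimono) (simp_all add: nonneg)
qed

definition hloc_weight :: "'a set \<Rightarrow> ('a \<Rightarrow> 'a \<Rightarrow> bool) \<Rightarrow> ('a \<Rightarrow> 'a \<Rightarrow> real) \<Rightarrow> 'a \<Rightarrow> 'a \<Rightarrow> real"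
  where "hloc_weight V E w v u =
           (if u = v then wdeg E w V v / 2 else if E v u then w v u else 0)"

lemma wdeg_eq_sum:
  "finite A \<Longrightarrow> wdeg E w A v = (\<Sum>u\<in>A. if E v u then w v u else 0)"
  unfolding wdeg_def nbhd_def by (rule sum.inter_filter)

lemma wdeg_nonneg:
  assumes "wgraph V E w" "finite A"
  shows "0 \<le> wdeg E w A v"
  unfolding wdeg_eq_sum[OF assms(2)]
  using assms(1) by (intro sum_nonneg) (auto simp: wgraph_def less_imp_le)

lemma hloc_weight_nonneg:
  "wgraph V E w \<Longrightarrow> 0 \<le> hloc_weight V E w v u"
  using wdeg_nonneg[of V E w V v]
  by (auto simp: hloc_weight_def wgraph_def less_imp_le)

lemma hloc_eq_min_sum:
  assumes G: "wgraph V E w" and "A \<subseteq> V"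
  shows "hloc V E w A v = min (wdeg E w V v / 2) (sum (hloc_weight V E w v) A)"
proof -
  have "finite A" using G assms(2) finite_subset unfolding wgraph_def by blast
  have "hloc_weight V E w v u
          = (if u = v then wdeg E w V v / 2 else 0) + (if E v u then w v u else 0)" for u
    using G by (simp add: hloc_weight_def wgraph_def)
  then have "sum (hloc_weight V E w v) A
               = (if v \<in> A then wdeg E w V v / 2 else 0) + wdeg E w A v"
    using \<open>finite A\<close> by (simp add: sum.distrib wdeg_eq_sum)
  then show ?thesis
    using wdeg_nonneg[OF G \<open>finite A\<close>, of v] by (simp add: hloc_def min_def)
qed

theorem mainTheorem12:
  fixes V :: "'a set" and E :: "'a \<Rightarrow> 'a \<Rightarrow> bool" and w :: "'a \<Rightarrow> 'a \<Rightarrow> real"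
  assumes "wgraph V E w"
  shows "\<forall>A B. A \<subseteq> B \<and> B \<subseteq> V \<longrightarrow>
           hfun V E w A \<le> hfun V E w B \<and>
           (\<forall>x\<in>V. hfun V E w (B \<union> {x}) - hfun V E w B
                    \<le> hfun V E w (A \<union> {x}) - hfun V E w A)"
proof (intro allI impI conjI ballI)
  fix A B assume AB: "A \<subseteq> B \<and> B \<subseteq> V"
  then have "A \<subseteq> V" "B \<subseteq> V" by auto
  have "finite B" using assms \<open>B \<subseteq> V\<close> finite_subset unfolding wgraph_def by blast
  note h_min = hloc_eq_min_sum[OF assms]
  note nonneg = hloc_weight_nonneg[OF assms]
  show "hfun V E w A \<le> hfun V E w B"
    unfolding hfun_def h_min[OF \<open>A \<subseteq> V\<close>] h_min[OF \<open>B \<subseteq> V\<close>]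
    using AB by (intro sum_mono min_sum_mono[OF nonneg \<open>finite B\<close>]) auto
  fix x assume "x \<in> V"
  then have "A \<union> {x} \<subseteq> V" "B \<union> {x} \<subseteq> V" using AB by auto
  have "hfun V E w (B \<union> {x}) - hfun V E w B
          = (\<Sum>v\<in>V. hloc V E w (B \<union> {x}) v - hloc V E w B v)"
    unfolding hfun_def by (simp add: sum_subtractf)
  also have "\<dots> \<le> (\<Sum>v\<in>V. hloc V E w (A \<union> {x}) v - hloc V E w A v)"
    unfolding h_min[OF \<open>A \<subseteq> V\<close>] h_min[OF \<open>B \<subseteq> V\<close>]
      h_min[OF \<open>A \<union> {x} \<subseteq> V\<close>] h_min[OF \<open>B \<union> {x} \<subseteq> V\<close>]
    using AB by (intro sum_mono) (simp add: min_sum_submodular[OF nonneg \<open>finite B\<close>])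
  also have "\<dots> = hfun V E w (A \<union> {x}) - hfun V E w A"
    unfolding hfun_def by (simp add: sum_subtractf)
  finally show "hfun V E w (B \<union> {x}) - hfun V E w B \<le> hfun V E w (A \<union> {x}) - hfun V E w A" .
qed

end
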